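(* Let $\Gamma,\Delta$ be finite multisets of formulas and $\Sigma$ a finite multiset of outmost-boxed formulas. For every propositional variable $p$ and every agent symbol $a$ there exists a formula $A$ such that: (i) $\mathsf{V}(A)\subseteq\mathsf{V}(\Sigma\cup\Gamma\cup\Delta)\setminus\{p\}$ and $\mathsf{Agt}(A)\subseteq\mathsf{Agt}(\Sigma\cup\Gamma\cup\Delta)\setminus\{a\}$; (ii) $\mathsf{G}(\mathbf{KT}^+_D)\vdash\Sigma\mid\Gamma,A\Rightarrow\Delta$; (iii) for all finite multisets $\Pi,\Lambda$ of formulas and every finite multiset $\Theta$ of outmost-boxed formulas with $p\notin\mathsf{V}(\Pi\cup\Lambda\cup\Theta)$ and $a\notin\mathsf{Agt}(\Pi\cup\Lambda\cup\Theta)$: if $\mathsf{G}(\mathbf{KT}^+_D)\vdash\Theta,\Sigma\mid\Pi,\Gamma\Rightarrow\Delta,\Lambda$, then $\mathsf{G}(\mathbf{KT}^+_D)\vdash\emptyset\mid\Theta,\Pi\Rightarrow A,\Lambda$.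
   Context: Language: fix a finite nonempty set $\mathsf{Agt}$ of agent symbols and a countable set $\mathsf{Prop}$ of propositional variables; $\mathsf{Grp}$ is the set of nonempty subsets of $\mathsf{Agt}$. Formulas: $\alpha::=p\mid\bot\mid\alpha\wedge\alpha\mid\alpha\vee\alpha\mid\alpha\rightarrow\alpha\mid\neg\alpha\mid D_G\alpha$ with $p\in\mathsf{Prop}$, $G\in\mathsf{Grp}$. $\mathsf{V}(\cdot)$ is the set of propositional variables occurring, $\mathsf{Agt}(\cdot)$ the set of agent symbols occurring (the union of all $G$ with $D_G$ occurring); for multisets these are unions. An outmost-boxed formula is one of the form $D_G\gamma$. Calculus $\mathsf{G}(\mathbf{KT}^+_D)$: a T-sequent $\Sigma\mid\Gamma\Rightarrow\Delta$ consists of finite multisets $\Gamma,\Delta$ of formulas and a finite multiset $\Sigma$ of outmost-boxed formulas; $\vdash S$ means $S$ is the root of a finite tree built from initial sequents by the rules. Initial sequents: $\Sigma\mid\Gamma,p\Rightarrow p,\Delta$ ($p\in\mathsf{Prop}$) and $\Sigma\mid\bot,\Gamma\Rightarrow\Delta$. Propositional rules (with $\Sigma$ unchanged): $(R\wedge)$ from $\Sigma\mid\Gamma\Rightarrow\Delta,\alpha_1$ and $\Sigma\mid\Gamma\Rightarrow\Delta,\alpha_2$ infer $\Sigma\mid\Gamma\Rightarrow\Delta,\alpha_1\wedge\alpha_2$; $(L\wedge)$ from $\Sigma\mid\alpha_1,\alpha_2,\Gamma\Rightarrow\Delta$ infer $\Sigma\mid\alpha_1\wedge\alpha_2,\Gamma\Rightarrow\Delta$;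 $(R\vee)$ from $\Sigma\mid\Gamma\Rightarrow\Delta,\alpha_1,\alpha_2$ infer $\Sigma\mid\Gamma\Rightarrow\Delta,\alpha_1\vee\alpha_2$; $(L\vee)$ from $\Sigma\mid\alpha_1,\Gamma\Rightarrow\Delta$ and $\Sigma\mid\alpha_2,\Gamma\Rightarrow\Delta$ infer $\Sigma\mid\alpha_1\vee\alpha_2,\Gamma\Rightarrow\Delta$; $(R\rightarrow)$ from $\Sigma\mid\alpha_1,\Gamma\Rightarrow\Delta,\alpha_2$ infer $\Sigma\mid\Gamma\Rightarrow\Delta,\alpha_1\rightarrow\alpha_2$; $(L\rightarrow)$ from $\Sigma\mid\Gamma\Rightarrow\Delta,\alpha_1$ and $\Sigma\mid\alpha_2,\Gamma\Rightarrow\Delta$ infer $\Sigma\mid\alpha_1\rightarrow\alpha_2,\Gamma\Rightarrow\Delta$; $(R\neg)$ from $\Sigma\mid\alpha,\Gamma\Rightarrow\Delta$ infer $\Sigma\mid\Gamma\Rightarrow\Delta,\neg\alpha$; $(L\neg)$ from $\Sigma\mid\Gamma\Rightarrow\Delta,\alpha$ infer $\Sigma\mid\neg\alpha,\Gamma\Rightarrow\Delta$. Modal rules: $(D_K^+)$: from $\emptyset\mid\alpha_1,\dots,\alpha_n\Rightarrow\beta$ ($n\ge0$) infer $\Sigma,D_{G_1}\alpha_1,\dots,D_{G_n}\alpha_n\mid\Pi\Rightarrow D_G\beta,\Omega$, provided $G_i\subseteq G$ for all $i$, $\Sigma$ consists only of formulas $D_H\gamma$ with $H\not\subseteq G$,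 $\Pi$ consists only of propositional variables and $\bot$, and $\Omega$ only of propositional variables, $\bot$ and outmost-boxed formulas; $(D_T^+)$: from $D_G\alpha,\Sigma\mid\Gamma,\alpha\Rightarrow\Delta$ infer $\Sigma\mid\Gamma,D_G\alpha\Rightarrow\Delta$. *)

theory Defs
  imports Main "HOL-Library.Multiset"
begin

datatype 'a fm =
    Var nat
  | Bot
  | And "'a fm" "'a fm"
  | Or "'a fm" "'a fm"
  | Imp "'a fm" "'a fm"
  | Neg "'a fm"
  | D "'a set" "'a fm"

fun wf :: "'a fm \<Rightarrow> bool" where
  "wf (Var p) = True"
| "wf Bot = True"
| "wf (And x y) = (wf x \<and> wf y)"
| "wf (Or x y) = (wf x \<and> wf y)"
| "wf (Imp x y) = (wf x \<and> wf y)"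
| "wf (Neg x) = wf x"
| "wf (D G x) = (G \<noteq> {} \<and> wf x)"

fun vars :: "'a fm \<Rightarrow> nat set" where
  "vars (Var p) = {p}"
| "vars Bot = {}"
| "vars (And x y) = vars x \<union> vars y"
| "vars (Or x y) = vars x \<union> vars y"
| "vars (Imp x y) = vars x \<union> vars y"
| "vars (Neg x) = vars x"
| "vars (D G x) = vars x"

fun agts :: "'a fm \<Rightarrow> 'a set" where
  "agts (Var p) = {}"
| "agts Bot = {}"
| "agts (And x y) = agts x \<union> agts y"
| "agts (Or x y) = agts x \<union> agts y"
| "agts (Imp x y) = agts x \<union> agts y"
| "agts (Neg x) = agts x"
| "agts (D G x) = G \<union> agts x"

definition vars_ms :: "'a fm multiset \<Rightarrow> nat set" where
  "vars_ms M = (\<Union>x\<in>set_mset M. vars x)"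

definition agts_ms :: "'a fm multiset \<Rightarrow> 'a set" where
  "agts_ms M = (\<Union>x\<in>set_mset M. agts x)"

definition wf_ms :: "'a fm multiset \<Rightarrow> bool" where
  "wf_ms M = (\<forall>x\<in>#M. wf x)"

fun boxed :: "'a fm \<Rightarrow> bool" where
  "boxed (D G x) = True"
| "boxed _ = False"

definition boxed_ms :: "'a fm multiset \<Rightarrow> bool" where
  "boxed_ms M = (\<forall>x\<in>#M. boxed x)"

fun atom_or_bot :: "'a fm \<Rightarrow> bool" where
  "atom_or_bot (Var p) = True"
| "atom_or_bot Bot = True"
| "atom_or_bot _ = False"

text \<open>Derivability in G(KT+_D): deriv S G Dl means  S | G \<Rightarrow> Dl.
The boxed-ness of the Sigma component (T-sequent condition) is imposed at the
leaves; all rules preserve it.\<close>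
inductive deriv :: "'a fm multiset \<Rightarrow> 'a fm multiset \<Rightarrow> 'a fm multiset \<Rightarrow> bool" where
  Ax: "boxed_ms S \<Longrightarrow> deriv S (add_mset (Var p) G) (add_mset (Var p) Dl)"
| BotL: "boxed_ms S \<Longrightarrow> deriv S (add_mset Bot G) Dl"
| AndR: "deriv S G (add_mset a1 Dl) \<Longrightarrow> deriv S G (add_mset a2 Dl)
         \<Longrightarrow> deriv S G (add_mset (And a1 a2) Dl)"
| AndL: "deriv S (add_mset a1 (add_mset a2 G)) Dl \<Longrightarrow> deriv S (add_mset (And a1 a2) G) Dl"
| OrR: "deriv S G (add_mset a1 (add_mset a2 Dl)) \<Longrightarrow> deriv S G (add_mset (Or a1 a2) Dl)"
| OrL: "deriv S (add_mset a1 G) Dl \<Longrightarrow> deriv S (add_mset a2 G) Dl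
         \<Longrightarrow> deriv S (add_mset (Or a1 a2) G) Dl"
| ImpR: "deriv S (add_mset a1 G) (add_mset a2 Dl) \<Longrightarrow> deriv S G (add_mset (Imp a1 a2) Dl)"
| ImpL: "deriv S G (add_mset a1 Dl) \<Longrightarrow> deriv S (add_mset a2 G) Dl
         \<Longrightarrow> deriv S (add_mset (Imp a1 a2) G) Dl"
| NegR: "deriv S (add_mset a G) Dl \<Longrightarrow> deriv S G (add_mset (Neg a) Dl)"
| NegL: "deriv S G (add_mset a Dl) \<Longrightarrow> deriv S (add_mset (Neg a) G) Dl"
| DK: "deriv {#} (mset (map snd L)) {#b#}
       \<Longrightarrow> (\<forall>(Gi, ai)\<in>set L. Gi \<subseteq> Grp)
       \<Longrightarrow> (\<forall>x\<in>#S. \<exists>H c. x = D H c \<and> \<not> H \<subseteq> Grp)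
       \<Longrightarrow> (\<forall>x\<in>#P. atom_or_bot x)
       \<Longrightarrow> (\<forall>x\<in>#Om. atom_or_bot x \<or> boxed x)
       \<Longrightarrow> deriv (S + mset (map (\<lambda>(Gi, ai). D Gi ai) L)) P (add_mset (D Grp b) Om)"
| DT: "deriv (add_mset (D Grp a) S) (add_mset a G) Dl \<Longrightarrow> deriv S (add_mset (D Grp a) G) Dl"

end

theory Submission
  imports Defs
begin

text \<open>
  Interpolants are built by induction on the weight of \<open>\<Sigma> | \<Gamma> \<Rightarrow> \<Delta>\<close>, reading the rules
  backwards. The propositional rules and \<open>D\<^sub>T\<^sup>+\<close> are invertible, so a sequent with a compound
  formula in \<open>\<Gamma>\<close>, or a compound unboxed one in \<open>\<Delta>\<close>, inherits the interpolant of its premise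
  (the conjunction of both interpolants for a branching rule); a derivable sequent gets \<open>\<not>\<bottom>\<close>.
  Write \<open>\<Sigma>\<^sup>H\<close> for the bodies \<open>\<gamma>\<close> of the boxes \<open>D\<^sub>G \<gamma> \<in> \<Sigma>\<close> with \<open>G \<subseteq> H\<close>. An irreducible,
  underivable sequent gets the disjunction of the atoms \<open>q \<noteq> p\<close> of \<open>\<Delta>\<close>, the negations \<open>\<not>q\<close>
  of the atoms \<open>q \<noteq> p\<close> of \<open>\<Gamma>\<close>, the boxes \<open>D\<^bsub>H - {a}\<^esub> B\<close> for \<open>D\<^sub>H \<beta> \<in> \<Delta>\<close> with \<open>B\<close> an
  interpolant of \<open>\<Sigma>\<^sup>H \<Rightarrow> \<beta>\<close>, and the formulas \<open>\<not> D\<^sub>H\<^sub>' \<not>C\<close> for groups \<open>H\<close> with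
  \<open>a \<notin> H\<close>, where \<open>C\<close> interpolates \<open>\<Sigma>\<^sup>H \<Rightarrow>\<close> and \<open>H'\<close> is the union of the groups of the
  boxes contributing to \<open>\<Sigma>\<^sup>H\<close>. For clause (iii), decompose \<open>\<Pi>\<close> and \<open>\<Lambda>\<close> by invertibility
  and look at the last rule of the derivation of \<open>\<Theta>, \<Sigma> | \<Pi>, \<Gamma> \<Rightarrow> \<Delta>, \<Lambda>\<close>: an axiom
  across the two sides yields a literal disjunct, and a \<open>D\<^sub>K\<^sup>+\<close> step yields a box disjunct if its
  principal box lies in \<open>\<Delta>\<close> and a diamond disjunct if it lies in \<open>\<Lambda>\<close>.
\<close>

lemma vars_ms_simps [simp]:
  "vars_ms {#} = {}" "vars_ms (add_mset x M) = vars x \<union> vars_ms M"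
  "vars_ms (M + N) = vars_ms M \<union> vars_ms N"
  by (auto simp: vars_ms_def)

lemma agts_ms_simps [simp]:
  "agts_ms {#} = {}" "agts_ms (add_mset x M) = agts x \<union> agts_ms M"
  "agts_ms (M + N) = agts_ms M \<union> agts_ms N"
  by (auto simp: agts_ms_def)

lemma wf_ms_simps [simp]:
  "wf_ms {#}" "wf_ms (add_mset x M) \<longleftrightarrow> wf x \<and> wf_ms M"
  "wf_ms (M + N) \<longleftrightarrow> wf_ms M \<and> wf_ms N"
  by (auto simp: wf_ms_def)

lemma boxed_ms_simps [simp]:
  "boxed_ms {#}" "boxed_ms (add_mset x M) \<longleftrightarrow> boxed x \<and> boxed_ms M"
  "boxed_ms (M + N) \<longleftrightarrow> boxed_ms M \<and> boxed_ms N"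
  by (auto simp: boxed_ms_def)

lemma deriv_boxed_ms: "deriv S G Dl \<Longrightarrow> boxed_ms S"
  by (induction rule: deriv.induct) (auto simp: boxed_ms_def)

lemma deriv_Ax_mem: "Var q \<in># G \<Longrightarrow> Var q \<in># Dl \<Longrightarrow> boxed_ms S \<Longrightarrow> deriv S G Dl"
  by (metis deriv.Ax insert_DiffM)

lemma deriv_BotL_mem: "Bot \<in># G \<Longrightarrow> boxed_ms S \<Longrightarrow> deriv S G Dl"
  by (metis deriv.BotL insert_DiffM)

definition avoids :: "nat \<Rightarrow> 'a \<Rightarrow> 'a fm multiset \<Rightarrow> bool" where
  "avoids p a M \<longleftrightarrow> wf_ms M \<and> p \<notin> vars_ms M \<and> a \<notin> agts_ms M"

lemma avoids_simps [simp]: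
  "avoids p a {#}"
  "avoids p a (add_mset x M) \<longleftrightarrow> wf x \<and> p \<notin> vars x \<and> a \<notin> agts x \<and> avoids p a M"
  "avoids p a (M + N) \<longleftrightarrow> avoids p a M \<and> avoids p a N"
  by (auto simp: avoids_def)

fun box_group :: "'a fm \<Rightarrow> 'a set" where
  "box_group (D H x) = H"
| "box_group _ = {}"

fun unbox :: "'a fm \<Rightarrow> 'a fm" where
  "unbox (D H x) = x"
| "unbox x = x"

definition boxes_within :: "'a set \<Rightarrow> 'a fm multiset \<Rightarrow> 'a fm multiset" where
  "boxes_within H S = filter_mset (\<lambda>x. box_group x \<subseteq> H) S"

text \<open>\<open>unboxed_within H \<Sigma>\<close> is \<open>\<Sigma>\<^sup>H\<close>, the antecedent of the premise of a \<open>D\<^sub>K\<^sup>+\<close> step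
  with principal group \<open>H\<close>.\<close>
abbreviation unboxed_within :: "'a set \<Rightarrow> 'a fm multiset \<Rightarrow> 'a fm multiset" where
  "unboxed_within H S \<equiv> image_mset unbox (boxes_within H S)"

lemma boxes_within_simps [simp]:
  "boxes_within H {#} = {#}"
  "boxes_within H (add_mset x M) =
     (if box_group x \<subseteq> H then add_mset x (boxes_within H M) else boxes_within H M)"
  "boxes_within H (M + N) = boxes_within H M + boxes_within H N"
  by (auto simp: boxes_within_def)

lemma boxes_within_subseteq: "boxes_within H S \<subseteq># S"
  by (simp add: boxes_within_def)

lemma box_group_subset_agts: "box_group x \<subseteq> agts x"
  by (cases x) auto

lemma unboxed_within_signature:
  "vars_ms (unboxed_within H M) \<subseteq> vars_ms M"
  "agts_ms (unboxed_within H M) \<subseteq> agts_ms M"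
  "wf_ms M \<Longrightarrow> wf_ms (unboxed_within H M)"
proof -
  have "vars (unbox x) \<subseteq> vars x" "agts (unbox x) \<subseteq> agts x" "wf x \<Longrightarrow> wf (unbox x)" for x :: "'a fm"
    by (cases x; simp)+
  moreover have "set_mset (boxes_within H M) \<subseteq> set_mset M"
    by (simp add: boxes_within_def)
  ultimately show "vars_ms (unboxed_within H M) \<subseteq> vars_ms M"
    and "agts_ms (unboxed_within H M) \<subseteq> agts_ms M"
    and "wf_ms M \<Longrightarrow> wf_ms (unboxed_within H M)"
    by (fastforce simp: vars_ms_def agts_ms_def wf_ms_def)+
qed

lemma avoids_unboxed_within: "avoids p a M \<Longrightarrow> avoids p a (unboxed_within H M)"
  using unboxed_within_signature[where H = H and M = M] by (auto simp: avoids_def)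

lemma boxes_within_Diff_agent:
  assumes "a \<notin> agts_ms M"
  shows "boxes_within (H - {a}) M = boxes_within H M"
  unfolding boxes_within_def
proof (rule filter_mset_cong0)
  fix x assume "x \<in># M"
  then have "a \<notin> box_group x"
    using assms box_group_subset_agts[of x] by (auto simp: agts_ms_def)
  then show "box_group x \<subseteq> H - {a} \<longleftrightarrow> box_group x \<subseteq> H" by blast
qed

lemma boxes_within_empty_group:
  assumes "wf_ms M" and "boxed_ms M"
  shows "boxes_within {} M = {#}"
proof -
  have "box_group x \<noteq> {}" if "x \<in># M" for x
    using assms that by (cases x) (auto simp: wf_ms_def boxed_ms_def)
  then show ?thesis by (auto simp: boxes_within_def filter_mset_eq_conv)
qed

lemma boxes_within_Union_groups:
  "boxes_within (\<Union>(box_group ` set_mset (boxes_within H M))) M = boxes_within H M"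
  unfolding boxes_within_def by (rule filter_mset_cong0) auto

lemma finite_range_boxes_within: "finite (range (\<lambda>H. boxes_within H M))"
proof (rule finite_subset)
  show "range (\<lambda>H. boxes_within H M) \<subseteq> (\<lambda>X. filter_mset (\<lambda>x. x \<in> X) M) ` Pow (set_mset M)"
  proof
    fix N assume "N \<in> range (\<lambda>H. boxes_within H M)"
    then obtain H where "N = boxes_within H M" by blast
    then have "N = filter_mset (\<lambda>x. x \<in> {x \<in> set_mset M. box_group x \<subseteq> H}) M"
      unfolding boxes_within_def by (auto intro: filter_mset_cong0)
    then show "N \<in> (\<lambda>X. filter_mset (\<lambda>x. x \<in> X) M) ` Pow (set_mset M)" by blast
  qed
qed simp

lemma deriv_DK_within:
  assumes "deriv {#} (unboxed_within H S) {#b#}" and "boxed_ms S"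
    and "\<forall>x\<in>#P. atom_or_bot x" and "\<forall>x\<in>#Om. atom_or_bot x \<or> boxed x"
  shows "deriv S P (add_mset (D H b) Om)"
proof -
  obtain xs where xs: "mset xs = boxes_within H S" by (meson ex_mset)
  define L where "L = map (\<lambda>x. (box_group x, unbox x)) xs"
  have "\<forall>x\<in>set xs. boxed x"
    using \<open>boxed_ms S\<close> boxes_within_subseteq[of H S] unfolding boxed_ms_def xs[symmetric]
    by (meson in_multiset_in_set mset_subset_eqD)
  then have boxes_L: "map (\<lambda>(Gi, ai). D Gi ai) L = xs"
    unfolding L_def by (induction xs) (auto elim: boxed.elims)
  have "mset (map snd L) = unboxed_within H S"
    unfolding L_def xs[symmetric] by (simp add: comp_def)
  moreover have "\<forall>(Gi, ai)\<in>set L. Gi \<subseteq> H"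
    unfolding L_def using xs by (force simp: boxes_within_def simp flip: in_multiset_in_set)
  moreover have "\<forall>x\<in>#filter_mset (\<lambda>x. \<not> box_group x \<subseteq> H) S. \<exists>H' c. x = D H' c \<and> \<not> H' \<subseteq> H"
    using \<open>boxed_ms S\<close> unfolding boxed_ms_def by (fastforce elim: boxed.elims)
  ultimately have "deriv (filter_mset (\<lambda>x. \<not> box_group x \<subseteq> H) S + mset xs) P (add_mset (D H b) Om)"
    using assms(1,3,4) deriv.DK[of L b H _ P Om] unfolding boxes_L by auto
  moreover have "filter_mset (\<lambda>x. \<not> box_group x \<subseteq> H) S + mset xs = S"
    unfolding xs boxes_within_def by (metis multiset_partition add.commute)
  ultimately show ?thesis by simp
qed

lemma unboxed_within_DK_context:
  assumes "\<forall>(Gi, ai)\<in>set L. Gi \<subseteq> H" and "\<forall>x\<in>#S. \<exists>H' c. x = D H' c \<and> \<not> H' \<subseteq> H"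
  shows "unboxed_within H (S + mset (map (\<lambda>(Gi, ai). D Gi ai) L)) = mset (map snd L)"
proof -
  have "boxes_within H S = {#}"
    using assms(2) unfolding boxes_within_def filter_mset_eq_conv by fastforce
  moreover have "unboxed_within H (mset (map (\<lambda>(Gi, ai). D Gi ai) L)) = mset (map snd L)"
    using assms(1) by (induction L) auto
  ultimately show ?thesis by simp
qed

section \<open>A weight on sequents\<close>

text \<open>A box in \<open>\<Sigma>\<close> weighs one more than its body and a box elsewhere twice as much, so that
  \<open>D\<^sub>T\<^sup>+\<close>, which copies \<open>D\<^sub>H x\<close> into \<open>\<Sigma>\<close> and adds \<open>x\<close> to \<open>\<Gamma>\<close>, lowers the weight.\<close>
fun fm_weight :: "'a fm \<Rightarrow> nat" where
  "fm_weight (Var q) = 1"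
| "fm_weight Bot = 1"
| "fm_weight (And x y) = fm_weight x + fm_weight y + 1"
| "fm_weight (Or x y) = fm_weight x + fm_weight y + 1"
| "fm_weight (Imp x y) = fm_weight x + fm_weight y + 1"
| "fm_weight (Neg x) = fm_weight x + 1"
| "fm_weight (D H x) = 2 * fm_weight x + 2"

definition seq_weight :: "'a fm multiset \<Rightarrow> 'a fm multiset \<Rightarrow> 'a fm multiset \<Rightarrow> nat" where
  "seq_weight S G Dl =
     (\<Sum>x\<in>#S. fm_weight (unbox x) + 1) + (\<Sum>x\<in>#G. fm_weight x) + (\<Sum>x\<in>#Dl. fm_weight x)"

lemma seq_weight_add_mset [simp]:
  "seq_weight (add_mset x S) G Dl = fm_weight (unbox x) + 1 + seq_weight S G Dl"
  "seq_weight S (add_mset x G) Dl = fm_weight x + seq_weight S G Dl"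
  "seq_weight S G (add_mset x Dl) = fm_weight x + seq_weight S G Dl"
  by (simp_all add: seq_weight_def)

lemma sum_weight_unboxed_within:
  "(\<Sum>x\<in>#unboxed_within H S. fm_weight x) + size (boxes_within H S) \<le> (\<Sum>x\<in>#S. fm_weight (unbox x) + 1)"
proof -
  have "(\<Sum>x\<in>#image_mset unbox M. fm_weight x) + size M = (\<Sum>x\<in>#M. fm_weight (unbox x) + 1)"
    for M :: "'a fm multiset"
    by (induction M) auto
  then have "(\<Sum>x\<in>#unboxed_within H S. fm_weight x) + size (boxes_within H S)
      = (\<Sum>x\<in>#boxes_within H S. fm_weight (unbox x) + 1)" .
  also have "\<dots> \<le> (\<Sum>x\<in>#S. fm_weight (unbox x) + 1)"
    using multiset_partition[of S "\<lambda>x. box_group x \<subseteq> H"]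
    unfolding boxes_within_def by (metis le_add1 image_mset_union sum_mset.union)
  finally show ?thesis .
qed

lemma seq_weight_box_premise:
  assumes "D H \<beta> \<in># Dl"
  shows "seq_weight {#} (unboxed_within H S) {#\<beta>#} < seq_weight S G Dl"
proof -
  obtain Dl' where "Dl = add_mset (D H \<beta>) Dl'"
    using assms by (metis multi_member_split)
  then show ?thesis
    using sum_weight_unboxed_within[of H S] by (simp add: seq_weight_def)
qed

lemma seq_weight_diamond_premise:
  assumes "boxes_within H S \<noteq> {#}"
  shows "seq_weight {#} (unboxed_within H S) {#} < seq_weight S G Dl"
  using sum_weight_unboxed_within[of H S] assms nonempty_has_size[of "boxes_within H S"]
  by (simp add: seq_weight_def)

lemma sequent_induct [case_names AndL OrL ImpL NegL DT AndR OrR ImpR NegR irreducible]: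
  assumes AndL: "\<And>S x y G Dl. P S (add_mset x (add_mset y G)) Dl \<Longrightarrow> P S (add_mset (And x y) G) Dl"
    and OrL: "\<And>S x y G Dl. P S (add_mset x G) Dl \<Longrightarrow> P S (add_mset y G) Dl
      \<Longrightarrow> P S (add_mset (Or x y) G) Dl"
    and ImpL: "\<And>S x y G Dl. P S G (add_mset x Dl) \<Longrightarrow> P S (add_mset y G) Dl
      \<Longrightarrow> P S (add_mset (Imp x y) G) Dl"
    and NegL: "\<And>S x G Dl. P S G (add_mset x Dl) \<Longrightarrow> P S (add_mset (Neg x) G) Dl"
    and DT: "\<And>S H x G Dl. P (add_mset (D H x) S) (add_mset x G) Dl \<Longrightarrow> P S (add_mset (D H x) G) Dl"
    and AndR: "\<And>S G x y Dl. P S G (add_mset x Dl) \<Longrightarrow> P S G (add_mset y Dl)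
      \<Longrightarrow> P S G (add_mset (And x y) Dl)"
    and OrR: "\<And>S G x y Dl. P S G (add_mset x (add_mset y Dl)) \<Longrightarrow> P S G (add_mset (Or x y) Dl)"
    and ImpR: "\<And>S G x y Dl. P S (add_mset x G) (add_mset y Dl) \<Longrightarrow> P S G (add_mset (Imp x y) Dl)"
    and NegR: "\<And>S G x Dl. P S (add_mset x G) Dl \<Longrightarrow> P S G (add_mset (Neg x) Dl)"
    and irreducible: "\<And>S G Dl. (\<And>S' G' Dl'. seq_weight S' G' Dl' < seq_weight S G Dl \<Longrightarrow> P S' G' Dl')
      \<Longrightarrow> \<forall>x\<in>#G. atom_or_bot x \<Longrightarrow> \<forall>x\<in>#Dl. atom_or_bot x \<or> boxed x \<Longrightarrow> P S G Dl"
  shows "P S G Dl"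
proof (induction "seq_weight S G Dl" arbitrary: S G Dl rule: less_induct)
  case less
  then have IH: "P S' G' Dl'" if "seq_weight S' G' Dl' < seq_weight S G Dl" for S' G' Dl'
    using that by blast
  consider x G' where "G = add_mset x G'" "\<not> atom_or_bot x"
    | x Dl' where "Dl = add_mset x Dl'" "\<not> atom_or_bot x" "\<not> boxed x"
    | "\<forall>x\<in>#G. atom_or_bot x" "\<forall>x\<in>#Dl. atom_or_bot x \<or> boxed x"
    by (metis multi_member_split)
  then show ?case
  proof cases
    case (1 x G')
    then show ?thesis
      unfolding 1 by (cases x) (auto intro!: AndL OrL ImpL NegL DT intro: IH[unfolded 1])
  next
    case (2 x Dl')
    then show ?thesis
      unfolding 2 by (cases x) (auto intro!: AndR OrR ImpR NegR intro: IH[unfolded 2])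
  next
    case 3
    then show ?thesis by (blast intro: irreducible IH)
  qed
qed

section \<open>Weakening\<close>

text \<open>The side formulas are decomposed down to atoms and boxes before \<open>D\<^sub>K\<^sup>+\<close> is applied;
  \<open>D\<^sub>T\<^sup>+\<close> enlarges \<open>\<Sigma>\<close> on the way, hence the premise is required for every extension of \<open>\<Sigma>\<close>.\<close>
lemma deriv_DK_any_context:
  assumes "\<And>S'. boxed_ms S' \<Longrightarrow> deriv {#} (unboxed_within H (S + S')) {#b#}"
    and "boxed_ms S"
  shows "deriv S G (add_mset (D H b) Dl)"
  using assms
proof (induction S G Dl rule: sequent_induct)
  case (DT S H' x G Dl)
  have "deriv (add_mset (D H' x) S) (add_mset x G) (add_mset (D H b) Dl)"
  proof (rule DT.IH)
    show "deriv {#} (unboxed_within H (add_mset (D H' x) S + S')) {#b#}" if "boxed_ms S'" for S'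
      using DT.prems(1)[of "add_mset (D H' x) S'"] that by simp
  qed (use DT.prems in simp)
  then show ?case by (rule deriv.DT)
next
  case (ImpL S x y G Dl)
  then show ?case using deriv.ImpL[of S G x "add_mset (D H b) Dl" y] by (simp add: add_mset_commute)
next
  case (NegL S x G Dl)
  then show ?case using deriv.NegL[of S G x "add_mset (D H b) Dl"] by (simp add: add_mset_commute)
next
  case (AndR S G x y Dl)
  then show ?case using deriv.AndR[of S G x "add_mset (D H b) Dl" y] by (simp add: add_mset_commute)
next
  case (OrR S G x y Dl)
  then show ?case using deriv.OrR[of S G x y "add_mset (D H b) Dl"] by (simp add: add_mset_commute)
next
  case (ImpR S G x y Dl)
  then show ?case using deriv.ImpR[of S x G y "add_mset (D H b) Dl"] by (simp add: add_mset_commute)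
next
  case (NegR S G x Dl)
  then show ?case using deriv.NegR[of S x G "add_mset (D H b) Dl"] by (simp add: add_mset_commute)
next
  case (irreducible S G Dl)
  then show ?case using irreducible.prems(1)[of "{#}"] by (intro deriv_DK_within) auto
qed (simp_all add: deriv.AndL deriv.OrL)

lemma deriv_weaken: "deriv S G Dl \<Longrightarrow> boxed_ms S' \<Longrightarrow> deriv (S + S') (G + G') (Dl + Dl')"
proof (induction arbitrary: S' G' Dl' rule: deriv.induct)
  case (DK L b H S P Om)
  let ?S = "S + mset (map (\<lambda>(Gi, ai). D Gi ai) L)"
  have "deriv {#} (unboxed_within H (?S + S' + S'')) {#b#}" if "boxed_ms S''" for S''
    using DK.IH[of "{#}" "unboxed_within H (S' + S'')" "{#}"] DK.prems that
      unboxed_within_DK_context[OF DK.hyps(2,3)]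
    by (simp flip: add.assoc)
  moreover have "boxed_ms (?S + S')"
    using DK.hyps(3) DK.prems by (auto simp: boxed_ms_def)
  ultimately have "deriv (?S + S') (P + G') (add_mset (D H b) (Om + Dl'))"
    by (rule deriv_DK_any_context)
  then show ?case by simp
qed (auto intro: deriv.intros)

section \<open>Invertibility\<close>

lemma add_mset_eq_add_msetE:
  assumes "add_mset x M = add_mset y N"
  obtains "x = y" "M = N" | K where "M = add_mset y K" "N = add_mset x K"
  using assms by (metis add_eq_conv_ex)

text \<open>The target \<open>C + S | A + G \<Rightarrow> B + Dl\<close> is a premise of the left rule for \<open>X\<close>, written as the
  context of the conclusion plus what the rule adds to it; one statement covers all left rules.\<close>
lemma deriv_invert_left:
  assumes "deriv S (add_mset X G) Dl" and "\<not> atom_or_bot X" and "boxed_ms C"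
    and AndL: "\<And>S x y G Dl. X = And x y \<Longrightarrow> deriv S (add_mset x (add_mset y G)) Dl
      \<Longrightarrow> deriv (C + S) (A + G) (B + Dl)"
    and OrL: "\<And>S x y G Dl. X = Or x y \<Longrightarrow> deriv S (add_mset x G) Dl \<Longrightarrow> deriv S (add_mset y G) Dl
      \<Longrightarrow> deriv (C + S) (A + G) (B + Dl)"
    and ImpL: "\<And>S x y G Dl. X = Imp x y \<Longrightarrow> deriv S G (add_mset x Dl) \<Longrightarrow> deriv S (add_mset y G) Dl
      \<Longrightarrow> deriv (C + S) (A + G) (B + Dl)"
    and NegL: "\<And>S x G Dl. X = Neg x \<Longrightarrow> deriv S G (add_mset x Dl) \<Longrightarrow> deriv (C + S) (A + G) (B + Dl)"
    and DT: "\<And>S H x G Dl. X = D H x \<Longrightarrow> deriv (add_mset (D H x) S) (add_mset x G) Dl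
      \<Longrightarrow> deriv (C + S) (A + G) (B + Dl)"
  shows "deriv (C + S) (A + G) (B + Dl)"
  using assms(1)
proof (induction S "add_mset X G" Dl arbitrary: G rule: deriv.induct)
  case (Ax S q G' Dl)
  then show ?case
    using assms(2,3) by (elim add_mset_eq_add_msetE) (auto intro: deriv_Ax_mem)
next
  case (BotL S G' Dl)
  then show ?case
    using assms(2,3) by (elim add_mset_eq_add_msetE) (auto intro: deriv_BotL_mem)
next
  case (AndL S x y G' Dl)
  from AndL.hyps(3) show ?case
  proof (cases rule: add_mset_eq_add_msetE)
    case (2 K)
    then show ?thesis
      using AndL.hyps(2)[of "add_mset x (add_mset y K)"] by (auto intro: deriv.AndL simp: add_mset_commute)
  qed (use AndL.hyps(1) assms(4) in auto)
next
  case (OrL S x G' Dl y)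
  from OrL.hyps(5) show ?case
  proof (cases rule: add_mset_eq_add_msetE)
    case (2 K)
    then show ?thesis
      using OrL.hyps(2)[of "add_mset x K"] OrL.hyps(4)[of "add_mset y K"]
      by (auto intro: deriv.OrL simp: add_mset_commute)
  qed (use OrL.hyps(1,3) assms(5) in auto)
next
  case (ImpL S G' x Dl y)
  from ImpL.hyps(5) show ?case
  proof (cases rule: add_mset_eq_add_msetE)
    case (2 K)
    then show ?thesis
      using ImpL.hyps(2)[of K] ImpL.hyps(4)[of "add_mset y K"]
      by (auto intro: deriv.ImpL simp: add_mset_commute)
  qed (use ImpL.hyps(1,3) assms(6) in auto)
next
  case (NegL S G' x Dl)
  from NegL.hyps(3) show ?case
  proof (cases rule: add_mset_eq_add_msetE)
    case (2 K)
    then show ?thesis using NegL.hyps(2)[of K] by (auto intro: deriv.NegL)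
  qed (use NegL.hyps(1) assms(7) in auto)
next
  case (DT H x S G' Dl)
  from DT.hyps(3) show ?case
  proof (cases rule: add_mset_eq_add_msetE)
    case (2 K)
    then show ?thesis
      using DT.hyps(2)[of "add_mset x K"] by (auto intro: deriv.DT simp: add_mset_commute)
  qed (use DT.hyps(1) assms(8) in auto)
next
  case (DK L b H S P Om)
  then show ?case using assms(2) by (metis add_mset_eq_add_msetE union_single_eq_member)
qed (auto intro: deriv.intros)

lemma deriv_invert_right:
  assumes "deriv S G (add_mset X Dl)" and "\<not> atom_or_bot X" and "\<not> boxed X"
    and AndR: "\<And>S G x y Dl. X = And x y \<Longrightarrow> deriv S G (add_mset x Dl) \<Longrightarrow> deriv S G (add_mset y Dl)
      \<Longrightarrow> deriv S (A + G) (B + Dl)"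
    and OrR: "\<And>S G x y Dl. X = Or x y \<Longrightarrow> deriv S G (add_mset x (add_mset y Dl))
      \<Longrightarrow> deriv S (A + G) (B + Dl)"
    and ImpR: "\<And>S G x y Dl. X = Imp x y \<Longrightarrow> deriv S (add_mset x G) (add_mset y Dl)
      \<Longrightarrow> deriv S (A + G) (B + Dl)"
    and NegR: "\<And>S G x Dl. X = Neg x \<Longrightarrow> deriv S (add_mset x G) Dl \<Longrightarrow> deriv S (A + G) (B + Dl)"
  shows "deriv S (A + G) (B + Dl)"
  using assms(1)
proof (induction S G "add_mset X Dl" arbitrary: Dl rule: deriv.induct)
  case (Ax S q G Dl')
  then show ?case
    using assms(2) by (elim add_mset_eq_add_msetE) (auto intro: deriv_Ax_mem)
next
  case (AndR S G x Dl' y)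
  from AndR.hyps(5) show ?case
  proof (cases rule: add_mset_eq_add_msetE)
    case (2 K)
    then show ?thesis
      using AndR.hyps(2)[of "add_mset x K"] AndR.hyps(4)[of "add_mset y K"]
      by (auto intro: deriv.AndR simp: add_mset_commute)
  qed (use AndR.hyps(1,3) assms(4) in auto)
next
  case (OrR S G x y Dl')
  from OrR.hyps(3) show ?case
  proof (cases rule: add_mset_eq_add_msetE)
    case (2 K)
    then show ?thesis
      using OrR.hyps(2)[of "add_mset x (add_mset y K)"] by (auto intro: deriv.OrR simp: add_mset_commute)
  qed (use OrR.hyps(1) assms(5) in auto)
next
  case (ImpR S x G y Dl')
  from ImpR.hyps(3) show ?case
  proof (cases rule: add_mset_eq_add_msetE)
    case (2 K)
    then show ?thesis
      using ImpR.hyps(2)[of "add_mset y K"] by (auto intro: deriv.ImpR simp: add_mset_commute)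
  qed (use ImpR.hyps(1) assms(6) in auto)
next
  case (NegR S x G Dl')
  from NegR.hyps(3) show ?case
  proof (cases rule: add_mset_eq_add_msetE)
    case (2 K)
    then show ?thesis using NegR.hyps(2)[of K] by (auto intro: deriv.NegR)
  qed (use NegR.hyps(1) assms(7) in auto)
next
  case (DK L b H S P Om)
  then show ?case using assms(2,3) by (metis add_mset_eq_add_msetE boxed.simps(1) union_single_eq_member)
qed (auto intro: deriv.intros)

lemma deriv_AndL_inv: "deriv S (add_mset (And x y) G) Dl \<Longrightarrow> deriv S (add_mset x (add_mset y G)) Dl"
  using deriv_invert_left[of S "And x y" G Dl "{#}" "{#x, y#}" "{#}"] by auto

lemma deriv_OrL_inv:
  assumes "deriv S (add_mset (Or x y) G) Dl"
  shows "deriv S (add_mset x G) Dl" and "deriv S (add_mset y G) Dl"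
  using deriv_invert_left[OF assms, of "{#}" "{#x#}" "{#}"] deriv_invert_left[OF assms, of "{#}" "{#y#}" "{#}"]
  by auto

lemma deriv_ImpL_inv:
  assumes "deriv S (add_mset (Imp x y) G) Dl"
  shows "deriv S G (add_mset x Dl)" and "deriv S (add_mset y G) Dl"
  using deriv_invert_left[OF assms, of "{#}" "{#}" "{#x#}"] deriv_invert_left[OF assms, of "{#}" "{#y#}" "{#}"]
  by auto

lemma deriv_NegL_inv: "deriv S (add_mset (Neg x) G) Dl \<Longrightarrow> deriv S G (add_mset x Dl)"
  using deriv_invert_left[of S "Neg x" G Dl "{#}" "{#}" "{#x#}"] by auto

lemma deriv_DT_inv: "deriv S (add_mset (D H x) G) Dl \<Longrightarrow> deriv (add_mset (D H x) S) (add_mset x G) Dl"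
  using deriv_invert_left[of S "D H x" G Dl "{#D H x#}" "{#x#}" "{#}"] by auto

lemma deriv_AndR_inv:
  assumes "deriv S G (add_mset (And x y) Dl)"
  shows "deriv S G (add_mset x Dl)" and "deriv S G (add_mset y Dl)"
  using deriv_invert_right[OF assms, of "{#}" "{#x#}"] deriv_invert_right[OF assms, of "{#}" "{#y#}"]
  by auto

lemma deriv_OrR_inv: "deriv S G (add_mset (Or x y) Dl) \<Longrightarrow> deriv S G (add_mset x (add_mset y Dl))"
  using deriv_invert_right[of S G "Or x y" Dl "{#}" "{#x, y#}"] by auto

lemma deriv_ImpR_inv: "deriv S G (add_mset (Imp x y) Dl) \<Longrightarrow> deriv S (add_mset x G) (add_mset y Dl)"
  using deriv_invert_right[of S G "Imp x y" Dl "{#x#}" "{#y#}"] by auto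

lemma deriv_NegR_inv: "deriv S G (add_mset (Neg x) Dl) \<Longrightarrow> deriv S (add_mset x G) Dl"
  using deriv_invert_right[of S G "Neg x" Dl "{#x#}" "{#}"] by auto

section \<open>Uniform interpolants\<close>

text \<open>Clause (iii) keeps \<open>\<Theta>\<close> in the boxed context, where the \<open>D\<^sub>K\<^sup>+\<close> case needs it;
  it is moved into the antecedent only at the very end.\<close>
definition uniform_interpolant ::
    "nat \<Rightarrow> 'a \<Rightarrow> 'a fm multiset \<Rightarrow> 'a fm multiset \<Rightarrow> 'a fm multiset \<Rightarrow> 'a fm \<Rightarrow> bool" where
  "uniform_interpolant p a S G Dl A \<longleftrightarrow> wf A
    \<and> vars A \<subseteq> vars_ms (S + G + Dl) - {p}
    \<and> agts A \<subseteq> agts_ms (S + G + Dl) - {a}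
    \<and> deriv S (add_mset A G) Dl
    \<and> (\<forall>Pi Lm Th. avoids p a (Pi + Lm + Th) \<and> boxed_ms Th \<and> deriv (Th + S) (Pi + G) (Dl + Lm)
          \<longrightarrow> deriv Th Pi (add_mset A Lm))"

lemma uniform_interpolantI:
  assumes "wf A" and "vars A \<subseteq> vars_ms (S + G + Dl) - {p}" and "agts A \<subseteq> agts_ms (S + G + Dl) - {a}"
    and "deriv S (add_mset A G) Dl"
    and "\<And>Pi Lm Th. deriv (Th + S) (Pi + G) (Dl + Lm) \<Longrightarrow> avoids p a (Pi + Lm + Th) \<Longrightarrow> boxed_ms Th
      \<Longrightarrow> deriv Th Pi (add_mset A Lm)"
  shows "uniform_interpolant p a S G Dl A"
  using assms unfolding uniform_interpolant_def by blast

lemma uniform_interpolantD: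
  assumes "uniform_interpolant p a S G Dl A"
  shows "wf A" and "vars A \<subseteq> vars_ms (S + G + Dl) - {p}" and "agts A \<subseteq> agts_ms (S + G + Dl) - {a}"
    and "deriv S (add_mset A G) Dl"
    and "\<And>Pi Lm Th. deriv (Th + S) (Pi + G) (Dl + Lm) \<Longrightarrow> avoids p a (Pi + Lm + Th) \<Longrightarrow> boxed_ms Th
      \<Longrightarrow> deriv Th Pi (add_mset A Lm)"
  using assms unfolding uniform_interpolant_def by blast+

lemma uniform_interpolant_derivable:
  assumes "deriv S G Dl"
  shows "uniform_interpolant p a S G Dl (Neg Bot)"
proof (rule uniform_interpolantI)
  show "deriv S (add_mset (Neg Bot) G) Dl"
    using deriv_weaken[OF assms, of "{#}" "{#Neg Bot#}" "{#}"] by simp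
  show "deriv Th Pi (add_mset (Neg Bot) Lm)" if "boxed_ms Th" for Th Pi Lm
    using that by (intro deriv.NegR deriv.BotL)
qed auto

lemma uniform_interpolant_transfer:
  assumes "uniform_interpolant p a S' G' Dl' A"
    and "vars_ms (S' + G' + Dl') \<subseteq> vars_ms (S + G + Dl)"
    and "agts_ms (S' + G' + Dl') \<subseteq> agts_ms (S + G + Dl)"
    and "\<And>X. deriv S' (X + G') Dl' \<Longrightarrow> deriv S (X + G) Dl"
    and "\<And>Th Pi Lm. deriv (Th + S) (Pi + G) (Dl + Lm) \<Longrightarrow> deriv (Th + S') (Pi + G') (Dl' + Lm)"
  shows "uniform_interpolant p a S G Dl A"
  using assms(1-3) assms(4)[of "{#A#}"] assms(5) unfolding uniform_interpolant_def by auto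

lemma uniform_interpolant_conj:
  assumes "uniform_interpolant p a S1 G1 Dl1 A1" and "uniform_interpolant p a S2 G2 Dl2 A2"
    and "vars_ms (S1 + G1 + Dl1) \<union> vars_ms (S2 + G2 + Dl2) \<subseteq> vars_ms (S + G + Dl)"
    and "agts_ms (S1 + G1 + Dl1) \<union> agts_ms (S2 + G2 + Dl2) \<subseteq> agts_ms (S + G + Dl)"
    and "\<And>X. deriv S1 (X + G1) Dl1 \<Longrightarrow> deriv S2 (X + G2) Dl2 \<Longrightarrow> deriv S (X + G) Dl"
    and "\<And>Th Pi Lm. deriv (Th + S) (Pi + G) (Dl + Lm) \<Longrightarrow> deriv (Th + S1) (Pi + G1) (Dl1 + Lm)"
    and "\<And>Th Pi Lm. deriv (Th + S) (Pi + G) (Dl + Lm) \<Longrightarrow> deriv (Th + S2) (Pi + G2) (Dl2 + Lm)"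
  shows "uniform_interpolant p a S G Dl (And A1 A2)"
proof (rule uniform_interpolantI)
  have "deriv S1 ({#A1, A2#} + G1) Dl1"
    using deriv_weaken[OF uniform_interpolantD(4)[OF assms(1)], of "{#}" "{#A2#}" "{#}"]
    by (simp add: add_mset_commute)
  moreover have "deriv S2 ({#A1, A2#} + G2) Dl2"
    using deriv_weaken[OF uniform_interpolantD(4)[OF assms(2)], of "{#}" "{#A1#}" "{#}"]
    by (simp add: add_mset_commute)
  ultimately have "deriv S ({#A1, A2#} + G) Dl"
    by (rule assms(5))
  then show "deriv S (add_mset (And A1 A2) G) Dl"
    by (simp add: deriv.AndL)
  show "deriv Th Pi (add_mset (And A1 A2) Lm)"
    if "deriv (Th + S) (Pi + G) (Dl + Lm)" and "avoids p a (Pi + Lm + Th)" and "boxed_ms Th"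
    for Pi Lm Th
    using that uniform_interpolantD(5)[OF assms(1)] uniform_interpolantD(5)[OF assms(2)] assms(6,7)
    by (blast intro: deriv.AndR)
qed (use assms(1-4) uniform_interpolantD[OF assms(1)] uniform_interpolantD[OF assms(2)] in auto)

lemma uniform_interpolant_AndL:
  assumes "uniform_interpolant p a S (add_mset x (add_mset y G)) Dl A"
  shows "uniform_interpolant p a S (add_mset (And x y) G) Dl A"
  using assms by (rule uniform_interpolant_transfer) (auto intro: deriv.AndL deriv_AndL_inv)

lemma uniform_interpolant_OrL:
  assumes "uniform_interpolant p a S (add_mset x G) Dl A1"
    and "uniform_interpolant p a S (add_mset y G) Dl A2"
  shows "uniform_interpolant p a S (add_mset (Or x y) G) Dl (And A1 A2)"
  using assms by (rule uniform_interpolant_conj) (auto intro: deriv.OrL dest: deriv_OrL_inv)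

lemma uniform_interpolant_ImpL:
  assumes "uniform_interpolant p a S G (add_mset x Dl) A1"
    and "uniform_interpolant p a S (add_mset y G) Dl A2"
  shows "uniform_interpolant p a S (add_mset (Imp x y) G) Dl (And A1 A2)"
  using assms by (rule uniform_interpolant_conj) (auto intro: deriv.ImpL dest: deriv_ImpL_inv)

lemma uniform_interpolant_NegL:
  assumes "uniform_interpolant p a S G (add_mset x Dl) A"
  shows "uniform_interpolant p a S (add_mset (Neg x) G) Dl A"
  using assms by (rule uniform_interpolant_transfer) (auto intro: deriv.NegL deriv_NegL_inv)

lemma uniform_interpolant_DT:
  assumes "uniform_interpolant p a (add_mset (D H x) S) (add_mset x G) Dl A"
  shows "uniform_interpolant p a S (add_mset (D H x) G) Dl A"
  using assms by (rule uniform_interpolant_transfer) (auto intro: deriv.DT dest: deriv_DT_inv)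

lemma uniform_interpolant_AndR:
  assumes "uniform_interpolant p a S G (add_mset x Dl) A1"
    and "uniform_interpolant p a S G (add_mset y Dl) A2"
  shows "uniform_interpolant p a S G (add_mset (And x y) Dl) (And A1 A2)"
  using assms by (rule uniform_interpolant_conj) (auto intro: deriv.AndR dest: deriv_AndR_inv)

lemma uniform_interpolant_OrR:
  assumes "uniform_interpolant p a S G (add_mset x (add_mset y Dl)) A"
  shows "uniform_interpolant p a S G (add_mset (Or x y) Dl) A"
  using assms by (rule uniform_interpolant_transfer) (auto intro: deriv.OrR deriv_OrR_inv)

lemma uniform_interpolant_ImpR:
  assumes "uniform_interpolant p a S (add_mset x G) (add_mset y Dl) A"
  shows "uniform_interpolant p a S G (add_mset (Imp x y) Dl) A"
  using assms by (rule uniform_interpolant_transfer) (auto intro: deriv.ImpR deriv_ImpR_inv)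

lemma uniform_interpolant_NegR:
  assumes "uniform_interpolant p a S (add_mset x G) Dl A"
  shows "uniform_interpolant p a S G (add_mset (Neg x) Dl) A"
  using assms by (rule uniform_interpolant_transfer) (auto intro: deriv.NegR deriv_NegR_inv)

section \<open>The irreducible case\<close>

definition Disj :: "'a fm list \<Rightarrow> 'a fm" where
  "Disj xs = foldr Or xs Bot"

lemma Disj_simps [simp]:
  "vars (Disj xs) = (\<Union>x\<in>set xs. vars x)"
  "agts (Disj xs) = (\<Union>x\<in>set xs. agts x)"
  "wf (Disj xs) \<longleftrightarrow> (\<forall>x\<in>set xs. wf x)"
  unfolding Disj_def by (induction xs) auto

lemma deriv_Disj_left:
  "boxed_ms S \<Longrightarrow> (\<And>x. x \<in> set xs \<Longrightarrow> deriv S (add_mset x G) Dl) \<Longrightarrow> deriv S (add_mset (Disj xs) G) Dl"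
  unfolding Disj_def by (induction xs) (auto intro: deriv.OrL deriv.BotL)

lemma deriv_Disj_right: "x \<in> set xs \<Longrightarrow> deriv S G (add_mset x Dl) \<Longrightarrow> deriv S G (add_mset (Disj xs) Dl)"
proof (induction xs arbitrary: Dl)
  case (Cons y xs)
  have "deriv S G (add_mset y (add_mset (Disj xs) Dl))"
  proof (cases "x = y")
    case True
    then show ?thesis
      using deriv_weaken[OF Cons.prems(2), of "{#}" "{#}" "{#Disj xs#}"] by (simp add: add_mset_commute)
  next
    case False
    then show ?thesis
      using Cons deriv_weaken[of S G "add_mset (Disj xs) Dl" "{#}" "{#}" "{#y#}"] by simp
  qed
  then show ?case unfolding Disj_def by (simp add: deriv.OrR)
qed simp

text \<open>\<open>C\<close> is indexed by the multiset \<open>boxes_within H S\<close> rather than by the group \<open>H\<close>: there are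
  only finitely many of those, so the disjunction stays finite without the agent type being finite.\<close>
locale irreducible_sequent =
  fixes p :: nat and a :: 'a and S G Dl :: "'a fm multiset"
    and B :: "'a set \<Rightarrow> 'a fm \<Rightarrow> 'a fm" and C :: "'a fm multiset \<Rightarrow> 'a fm"
  assumes wf_S: "wf_ms S" and boxed_S: "boxed_ms S"
    and atomic_G: "\<forall>x\<in>#G. atom_or_bot x"
    and atomic_Dl: "\<forall>x\<in>#Dl. atom_or_bot x \<or> boxed x"
    and not_derivable: "\<not> deriv S G Dl"
    and B_interpolant:
      "D H \<beta> \<in># Dl \<Longrightarrow> uniform_interpolant p a {#} (unboxed_within H S) {#\<beta>#} (B H \<beta>)"
    and C_interpolant:
      "boxes_within H S \<noteq> {#} \<Longrightarrow> uniform_interpolant p a {#} (unboxed_within H S) {#} (C (boxes_within H S))"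
begin

definition disjuncts :: "'a fm set" where
  "disjuncts =
     {Var q | q. Var q \<in># Dl \<and> q \<noteq> p}
   \<union> {Neg (Var q) | q. Var q \<in># G \<and> q \<noteq> p}
   \<union> {D (H - {a}) (B H \<beta>) | H \<beta>. D H \<beta> \<in># Dl \<and> H - {a} \<noteq> {}}
   \<union> {Neg (D (\<Union>(box_group ` set_mset M)) (Neg (C M))) | M H. M = boxes_within H S \<and> M \<noteq> {#} \<and> a \<notin> H}"

lemma disjunctsE:
  assumes "d \<in> disjuncts"
  obtains (Var) q where "d = Var q" and "Var q \<in># Dl" and "q \<noteq> p"
  | (Neg) q where "d = Neg (Var q)" and "Var q \<in># G" and "q \<noteq> p"
  | (Box) H \<beta> where "d = D (H - {a}) (B H \<beta>)" and "D H \<beta> \<in># Dl" and "H - {a} \<noteq> {}"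
  | (Diamond) H where "d = Neg (D (\<Union>(box_group ` set_mset (boxes_within H S))) (Neg (C (boxes_within H S))))"
      and "boxes_within H S \<noteq> {#}" and "a \<notin> H"
  using assms unfolding disjuncts_def by blast

lemma finite_disjuncts: "finite disjuncts"
proof -
  have f: "{Var q | q. Var q \<in># Dl \<and> q \<noteq> p} \<subseteq> set_mset Dl"
    "{Neg (Var q) | q. Var q \<in># G \<and> q \<noteq> p} \<subseteq> Neg ` set_mset G"
    "{D (H - {a}) (B H \<beta>) | H \<beta>. D H \<beta> \<in># Dl \<and> H - {a} \<noteq> {}}
      \<subseteq> (\<lambda>x. D (box_group x - {a}) (B (box_group x) (unbox x))) ` set_mset Dl"
    "{Neg (D (\<Union>(box_group ` set_mset M)) (Neg (C M))) | M H. M = boxes_within H S \<and> M \<noteq> {#} \<and> a \<notin> H}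
      \<subseteq> (\<lambda>M. Neg (D (\<Union>(box_group ` set_mset M)) (Neg (C M)))) ` range (\<lambda>H. boxes_within H S)"
    by force+
  show ?thesis
    unfolding disjuncts_def
    by (intro finite_UnI finite_subset[OF f(1)] finite_subset[OF f(2)] finite_subset[OF f(3)]
        finite_subset[OF f(4)] finite_imageI finite_set_mset finite_range_boxes_within)
qed

lemma box_disjunct:
  assumes "D H \<beta> \<in># Dl" and "H - {a} \<noteq> {}"
  shows "deriv S (add_mset (D (H - {a}) (B H \<beta>)) G) Dl"
proof -
  obtain Dl' where Dl: "Dl = add_mset (D H \<beta>) Dl'"
    using assms(1) by (metis multi_member_split)
  have "deriv {#} (add_mset (B H \<beta>) (unboxed_within H S)) {#\<beta>#}"
    using uniform_interpolantD(4)[OF B_interpolant[OF assms(1)]] .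
  then have "deriv {#} (unboxed_within H (add_mset (D (H - {a}) (B H \<beta>)) S)) {#\<beta>#}"
    by auto
  then have "deriv (add_mset (D (H - {a}) (B H \<beta>)) S) G Dl"
    unfolding Dl using boxed_S atomic_G atomic_Dl Dl by (intro deriv_DK_within) auto
  then have "deriv (add_mset (D (H - {a}) (B H \<beta>)) S) (add_mset (B H \<beta>) G) Dl"
    using deriv_weaken[of _ G Dl "{#}" "{#B H \<beta>#}" "{#}"] by simp
  then show ?thesis by (rule deriv.DT)
qed

lemma diamond_disjunct:
  assumes "boxes_within H S \<noteq> {#}"
  shows "deriv S (add_mset (Neg (D (\<Union>(box_group ` set_mset (boxes_within H S))) (Neg (C (boxes_within H S))))) G) Dl"
proof -
  let ?H = "\<Union>(box_group ` set_mset (boxes_within H S))" and ?C = "C (boxes_within H S)"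
  have "deriv {#} (add_mset ?C (unboxed_within H S)) {#}"
    using uniform_interpolantD(4)[OF C_interpolant[OF assms]] .
  then have "deriv {#} (unboxed_within ?H S) {#Neg ?C#}"
    unfolding boxes_within_Union_groups by (auto intro: deriv.NegR)
  then have "deriv S G (add_mset (D ?H (Neg ?C)) Dl)"
    using boxed_S atomic_G atomic_Dl by (intro deriv_DK_within) auto
  then show ?thesis by (rule deriv.NegL)
qed

lemma disjunct_signature:
  assumes "d \<in> disjuncts"
  shows "wf d \<and> vars d \<subseteq> vars_ms (S + G + Dl) - {p} \<and> agts d \<subseteq> agts_ms (S + G + Dl) - {a}"
  using assms
proof (cases rule: disjunctsE)
  case (Box H \<beta>)
  have "vars \<beta> \<subseteq> vars_ms Dl" and "H \<union> agts \<beta> \<subseteq> agts_ms Dl"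
    using Box(2) by (auto simp: vars_ms_def agts_ms_def)
  moreover note uniform_interpolantD(1-3)[OF B_interpolant[OF Box(2)]]
  moreover have "vars_ms (unboxed_within H S) \<subseteq> vars_ms S" "agts_ms (unboxed_within H S) \<subseteq> agts_ms S"
    by (rule unboxed_within_signature)+
  ultimately show ?thesis
    using Box(1,3) by auto
next
  case (Diamond H)
  have "box_group x \<noteq> {} \<and> box_group x \<subseteq> agts_ms S \<and> a \<notin> box_group x"
    if "x \<in># boxes_within H S" for x
  proof -
    have "x \<in># S" "box_group x \<subseteq> H"
      using that by (auto simp: boxes_within_def)
    then show ?thesis
      using wf_S boxed_S Diamond(3) box_group_subset_agts[of x]
      by (cases x) (auto simp: wf_ms_def boxed_ms_def agts_ms_def)
  qed
  moreover note uniform_interpolantD(1-3)[OF C_interpolant[OF Diamond(2)]]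
  moreover have "vars_ms (unboxed_within H S) \<subseteq> vars_ms S" "agts_ms (unboxed_within H S) \<subseteq> agts_ms S"
    by (rule unboxed_within_signature)+
  moreover obtain x where "x \<in># boxes_within H S"
    using Diamond(2) by blast
  ultimately show ?thesis
    using Diamond(1) by auto
qed (auto dest!: multi_member_split)

lemma deriv_disjunct:
  assumes "d \<in> disjuncts"
  shows "deriv S (add_mset d G) Dl"
  using assms
proof (cases rule: disjunctsE)
  case (Neg q)
  then show ?thesis
    using boxed_S by (auto intro!: deriv.NegL deriv_Ax_mem)
qed (auto intro: deriv_Ax_mem boxed_S box_disjunct diamond_disjunct)

definition interpolant :: "'a fm" where
  "interpolant = Disj (SOME xs. set xs = disjuncts)"

lemma interpolant_signature:
  "wf interpolant \<and> vars interpolant \<subseteq> vars_ms (S + G + Dl) - {p}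
    \<and> agts interpolant \<subseteq> agts_ms (S + G + Dl) - {a}"
  and deriv_interpolant_left: "deriv S (add_mset interpolant G) Dl"
  and deriv_interpolant_of_disjunct: "d \<in> disjuncts \<Longrightarrow> deriv Th Pi (add_mset d Lm) \<Longrightarrow> deriv Th Pi (add_mset interpolant Lm)"
proof -
  have set_list: "set (SOME xs. set xs = disjuncts) = disjuncts"
    using finite_list[OF finite_disjuncts] by (rule someI_ex)
  show "wf interpolant \<and> vars interpolant \<subseteq> vars_ms (S + G + Dl) - {p}
    \<and> agts interpolant \<subseteq> agts_ms (S + G + Dl) - {a}"
    unfolding interpolant_def using disjunct_signature by (simp add: set_list) blast
  show "deriv S (add_mset interpolant G) Dl"
    unfolding interpolant_def using boxed_S deriv_disjunct by (intro deriv_Disj_left) (simp_all add: set_list)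
  show "d \<in> disjuncts \<Longrightarrow> deriv Th Pi (add_mset d Lm) \<Longrightarrow> deriv Th Pi (add_mset interpolant Lm)"
    unfolding interpolant_def by (rule deriv_Disj_right) (simp add: set_list)
qed

lemma deriv_interpolant_weaken: "deriv Th Pi Lm \<Longrightarrow> deriv Th Pi (add_mset interpolant Lm)"
  using deriv_weaken[of Th Pi Lm "{#}" "{#}" "{#interpolant#}"] by simp

lemma deriv_interpolant_Ax:
  assumes "Var q \<in># Pi + G" and "Var q \<in># Dl + Lm" and "boxed_ms Th" and "p \<notin> vars_ms (Pi + Lm)"
  shows "deriv Th Pi (add_mset interpolant Lm)"
proof -
  consider "Var q \<in># Pi" "Var q \<in># Lm" | "Var q \<in># Pi" "Var q \<in># Dl"
    | "Var q \<in># G" "Var q \<in># Lm" | "Var q \<in># G" "Var q \<in># Dl"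
    using assms(1,2) by auto
  then show ?thesis
  proof cases
    case 1
    then show ?thesis
      using assms(3) by (intro deriv_interpolant_weaken deriv_Ax_mem)
  next
    case 2
    then have "Var q \<in> disjuncts"
      using assms(4) unfolding disjuncts_def by (auto dest!: multi_member_split)
    moreover have "deriv Th Pi (add_mset (Var q) Lm)"
      using 2 assms(3) by (auto intro: deriv_Ax_mem)
    ultimately show ?thesis
      by (rule deriv_interpolant_of_disjunct)
  next
    case 3
    then have "Neg (Var q) \<in> disjuncts"
      using assms(4) unfolding disjuncts_def by (auto dest!: multi_member_split)
    moreover have "deriv Th Pi (add_mset (Neg (Var q)) Lm)"
      using 3 assms(3) by (auto intro!: deriv.NegR deriv_Ax_mem)
    ultimately show ?thesis
      by (rule deriv_interpolant_of_disjunct)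
  next
    case 4
    then show ?thesis
      using not_derivable boxed_S deriv_Ax_mem by blast
  qed
qed

text \<open>If \<open>H = {a}\<close>, no box of \<open>\<Theta>\<close> takes part in the \<open>D\<^sub>K\<^sup>+\<close> step, which then already
  derives \<open>\<Sigma> | \<Gamma> \<Rightarrow> \<Delta>\<close>.\<close>
lemma deriv_interpolant_DK_box_in_Dl:
  assumes prem: "deriv {#} (unboxed_within H Th + unboxed_within H S) {#b#}"
    and "D H b \<in># Dl" and "\<forall>x\<in>#Pi. atom_or_bot x" and "\<forall>x\<in>#Lm. atom_or_bot x \<or> boxed x"
    and Th: "avoids p a Th" "boxed_ms Th"
  shows "deriv Th Pi (add_mset interpolant Lm)"
proof -
  have Th_within: "boxes_within H Th = boxes_within (H - {a}) Th"
    using Th(1) by (simp add: avoids_def boxes_within_Diff_agent)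
  show ?thesis
  proof (cases "H - {a} = {}")
    case True
    then have "boxes_within H Th = {#}"
      using Th boxes_within_empty_group[of Th] unfolding Th_within True by (simp add: avoids_def)
    then have "deriv S G (add_mset (D H b) (Dl - {#D H b#}))"
      using prem boxed_S atomic_G atomic_Dl by (intro deriv_DK_within) (auto dest: in_diffD)
    then show ?thesis
      using not_derivable assms(2) by (simp add: insert_DiffM)
  next
    case False
    have "deriv ({#} + {#}) (unboxed_within H Th + unboxed_within H S) ({#b#} + {#})"
      using prem by simp
    then have "deriv {#} (unboxed_within H Th) {#B H b#}"
      using uniform_interpolantD(5)[OF B_interpolant[OF assms(2)]] avoids_unboxed_within[OF Th(1)]
      by fastforce
    then have "deriv Th Pi (add_mset (D (H - {a}) (B H b)) Lm)"
      using Th assms(3,4) by (intro deriv_DK_within) (simp_all add: Th_within)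
    moreover have "D (H - {a}) (B H b) \<in> disjuncts"
      using assms(2) False unfolding disjuncts_def by blast
    ultimately show ?thesis
      by (blast intro: deriv_interpolant_of_disjunct)
  qed
qed

text \<open>The boxes of \<open>\<Sigma>\<close> used by the \<open>D\<^sub>K\<^sup>+\<close> step are traded for the single box
  \<open>D\<^sub>H\<^sub>' \<not>C\<close> in \<open>\<Theta>\<close>, which \<open>D\<^sub>T\<^sup>+\<close> and \<open>\<not>R\<close> turn into the disjunct \<open>\<not>D\<^sub>H\<^sub>' \<not>C\<close>.\<close>
lemma deriv_interpolant_DK_box_in_Lm:
  assumes prem: "deriv {#} (unboxed_within H Th + unboxed_within H S) {#b#}"
    and "\<forall>x\<in>#Pi. atom_or_bot x" and "\<forall>x\<in>#Lm. atom_or_bot x \<or> boxed x"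
    and Th: "avoids p a (add_mset (D H b) Th)" "boxed_ms Th"
  shows "deriv Th Pi (add_mset interpolant (add_mset (D H b) Lm))"
proof (cases "boxes_within H S = {#}")
  case True
  then have "deriv Th Pi (add_mset (D H b) Lm)"
    using prem Th(2) assms(2,3) by (intro deriv_DK_within) auto
  then show ?thesis
    by (rule deriv_interpolant_weaken)
next
  case False
  let ?H = "\<Union>(box_group ` set_mset (boxes_within H S))" and ?C = "C (boxes_within H S)"
  have "deriv {#} (unboxed_within H Th) (add_mset ?C {#b#})"
    using uniform_interpolantD(5)[OF C_interpolant[OF False], of "{#}" "unboxed_within H Th" "{#b#}"]
      prem Th(1) avoids_unboxed_within[of p a Th H]
    by simp
  then have "deriv {#} (add_mset (Neg ?C) (unboxed_within H Th)) {#b#}"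
    by (rule deriv.NegL)
  moreover have "?H \<subseteq> H"
    by (auto simp: boxes_within_def)
  ultimately have "deriv {#} (unboxed_within H (add_mset (D ?H (Neg ?C)) Th)) {#b#}"
    by simp
  then have "deriv (add_mset (D ?H (Neg ?C)) Th) Pi (add_mset (D H b) Lm)"
    using Th(2) assms(2,3) by (intro deriv_DK_within) auto
  then have "deriv (add_mset (D ?H (Neg ?C)) Th) (add_mset (Neg ?C) Pi) (add_mset (D H b) Lm)"
    using deriv_weaken[of _ Pi _ "{#}" "{#Neg ?C#}" "{#}"] by simp
  then have "deriv Th Pi (add_mset (Neg (D ?H (Neg ?C))) (add_mset (D H b) Lm))"
    by (intro deriv.NegR deriv.DT)
  moreover have "Neg (D ?H (Neg ?C)) \<in> disjuncts"
    using False Th(1) unfolding disjuncts_def by auto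
  ultimately show ?thesis
    by (blast intro: deriv_interpolant_of_disjunct)
qed

text \<open>After decomposing \<open>\<Pi>\<close> and \<open>\<Lambda>\<close>, the last rule of the derivation can only be an axiom
  or \<open>D\<^sub>K\<^sup>+\<close>.\<close>
lemma deriv_interpolant_irreducible:
  assumes "deriv (Th + S) (Pi + G) (Dl + Lm)"
    and "\<forall>x\<in>#Pi. atom_or_bot x" and "\<forall>x\<in>#Lm. atom_or_bot x \<or> boxed x"
    and "avoids p a (Pi + Lm + Th)" and "boxed_ms Th"
  shows "deriv Th Pi (add_mset interpolant Lm)"
proof -
  have atomic_left: "\<forall>x\<in>#Pi + G. atom_or_bot x"
    and atomic_right: "\<forall>x\<in>#Dl + Lm. atom_or_bot x \<or> boxed x"
    using assms(2,3) atomic_G atomic_Dl by auto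
  from assms(1) show ?thesis
  proof (cases rule: deriv.cases)
    case (Ax q G' Dl')
    then have "Var q \<in># Pi + G" "Var q \<in># Dl + Lm"
      by simp_all
    then show ?thesis
      using assms(4,5) by (intro deriv_interpolant_Ax) (simp_all add: avoids_def)
  next
    case (BotL G')
    then have "Bot \<in># Pi + G"
      by simp
    moreover have "\<not> Bot \<in># G"
      using not_derivable boxed_S deriv_BotL_mem by blast
    ultimately show ?thesis
      using assms(5) by (auto intro: deriv_BotL_mem)
  next
    case (DK L b H S' Om)
    have "unboxed_within H (Th + S) = mset (map snd L)"
      unfolding DK(1) using DK(4,5) by (rule unboxed_within_DK_context)
    then have prem: "deriv {#} (unboxed_within H Th + unboxed_within H S) {#b#}"
      using DK(3) by simp
    have "D H b \<in># Dl + Lm"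
      using DK(2) by simp
    then consider "D H b \<in># Dl" | Lm' where "Lm = add_mset (D H b) Lm'"
      by (metis multi_member_split union_iff)
    then show ?thesis
    proof cases
      case 1
      then show ?thesis
        using deriv_interpolant_DK_box_in_Dl[OF prem] assms by auto
    next
      case (2 Lm')
      then show ?thesis
        using deriv_interpolant_DK_box_in_Lm[OF prem] assms by auto
    qed
  qed (use atomic_left atomic_right in auto)
qed

lemma deriv_interpolant_of_extension:
  "deriv (Th + S) (Pi + G) (Dl + Lm) \<Longrightarrow> avoids p a (Pi + Lm + Th) \<Longrightarrow> boxed_ms Th
    \<Longrightarrow> deriv Th Pi (add_mset interpolant Lm)"
proof (induction Th Pi Lm rule: sequent_induct)
  case (AndL Th x y Pi Lm)
  then show ?case by (auto intro: deriv.AndL dest: deriv_AndL_inv)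
next
  case (OrL Th x y Pi Lm)
  then show ?case by (auto intro: deriv.OrL dest: deriv_OrL_inv)
next
  case (ImpL Th x y Pi Lm)
  then show ?case
    using deriv.ImpL[of Th Pi x "add_mset interpolant Lm" y] by (auto simp: add_mset_commute dest: deriv_ImpL_inv)
next
  case (NegL Th x Pi Lm)
  then show ?case
    using deriv.NegL[of Th Pi x "add_mset interpolant Lm"] by (auto simp: add_mset_commute dest: deriv_NegL_inv)
next
  case (DT Th H x Pi Lm)
  then show ?case by (auto intro: deriv.DT dest: deriv_DT_inv)
next
  case (AndR Th Pi x y Lm)
  then show ?case
    using deriv.AndR[of Th Pi x "add_mset interpolant Lm" y] by (auto simp: add_mset_commute dest: deriv_AndR_inv)
next
  case (OrR Th Pi x y Lm)
  then show ?case
    using deriv.OrR[of Th Pi x y "add_mset interpolant Lm"] by (auto simp: add_mset_commute dest: deriv_OrR_inv)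
next
  case (ImpR Th Pi x y Lm)
  then show ?case
    using deriv.ImpR[of Th x Pi y "add_mset interpolant Lm"] by (auto simp: add_mset_commute dest: deriv_ImpR_inv)
next
  case (NegR Th Pi x Lm)
  then show ?case
    using deriv.NegR[of Th x Pi "add_mset interpolant Lm"] by (auto simp: add_mset_commute dest: deriv_NegR_inv)
next
  case (irreducible Th Pi Lm)
  then show ?case by (intro deriv_interpolant_irreducible)
qed

lemma uniform_interpolant_interpolant: "uniform_interpolant p a S G Dl interpolant"
  using interpolant_signature deriv_interpolant_left deriv_interpolant_of_extension
  by (intro uniform_interpolantI) auto

end

lemma ex_uniform_interpolant_irreducible:
  assumes IH: "\<And>S' G' Dl'. seq_weight S' G' Dl' < seq_weight S G Dl \<Longrightarrow> wf_ms S' \<Longrightarrow> wf_ms G' \<Longrightarrow> wf_ms Dl'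
      \<Longrightarrow> boxed_ms S' \<Longrightarrow> \<exists>A. uniform_interpolant p a S' G' Dl' A"
    and "wf_ms S" "wf_ms Dl" "boxed_ms S"
    and "\<forall>x\<in>#G. atom_or_bot x" and "\<forall>x\<in>#Dl. atom_or_bot x \<or> boxed x"
  shows "\<exists>A. uniform_interpolant p a S G Dl A"
proof (cases "deriv S G Dl")
  case True
  then show ?thesis by (blast intro: uniform_interpolant_derivable)
next
  case False
  define B where "B H \<beta> = (SOME B. uniform_interpolant p a {#} (unboxed_within H S) {#\<beta>#} B)" for H \<beta>
  define C where "C M = (SOME C. uniform_interpolant p a {#} (image_mset unbox M) {#} C)" for M
  have wf_unboxed: "wf_ms (unboxed_within H S)" for H
    using assms(2) by (rule unboxed_within_signature(3))
  have "uniform_interpolant p a {#} (unboxed_within H S) {#\<beta>#} (B H \<beta>)" if "D H \<beta> \<in># Dl" for H \<beta>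
  proof -
    have "wf \<beta>"
      using that assms(3) by (auto simp: wf_ms_def)
    then have "\<exists>B. uniform_interpolant p a {#} (unboxed_within H S) {#\<beta>#} B"
      using IH[OF seq_weight_box_premise[OF that]] wf_unboxed by simp
    then show ?thesis
      unfolding B_def by (rule someI_ex)
  qed
  moreover have "uniform_interpolant p a {#} (unboxed_within H S) {#} (C (boxes_within H S))"
    if "boxes_within H S \<noteq> {#}" for H
  proof -
    have "\<exists>C. uniform_interpolant p a {#} (unboxed_within H S) {#} C"
      using IH[OF seq_weight_diamond_premise[OF that]] wf_unboxed by simp
    then show ?thesis
      unfolding C_def by (rule someI_ex)
  qed
  ultimately interpret irreducible_sequent p a S G Dl B C
    using assms False by unfold_locales auto
  show ?thesis
    using uniform_interpolant_interpolant by blast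
qed

lemma ex_uniform_interpolant:
  fixes S G Dl :: "'a fm multiset"
  shows "wf_ms S \<Longrightarrow> wf_ms G \<Longrightarrow> wf_ms Dl \<Longrightarrow> boxed_ms S \<Longrightarrow> \<exists>A. uniform_interpolant p a S G Dl A"
proof (induction S G Dl rule: sequent_induct)
  case (irreducible S G Dl)
  show ?case
    by (rule ex_uniform_interpolant_irreducible[OF irreducible(1)]) (use irreducible in auto)
qed (auto intro: uniform_interpolant_AndL uniform_interpolant_OrL uniform_interpolant_ImpL
  uniform_interpolant_NegL uniform_interpolant_DT uniform_interpolant_AndR uniform_interpolant_OrR
  uniform_interpolant_ImpR uniform_interpolant_NegR)

lemma deriv_boxed_into_antecedent: "deriv Th Pi Dl \<Longrightarrow> deriv {#} (Th + Pi) Dl"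
proof (induction Th arbitrary: Pi)
  case (add x Th)
  obtain H c where x: "x = D H c"
    using deriv_boxed_ms[OF add.prems] by (auto elim: boxed.elims)
  have "deriv (add_mset x Th) (add_mset c Pi) Dl"
    using deriv_weaken[OF add.prems, of "{#}" "{#c#}" "{#}"] by simp
  then have "deriv Th (add_mset x Pi) Dl"
    unfolding x by (rule deriv.DT)
  then show ?case
    using add.IH by fastforce
qed simp

theorem theorem6p18:
  fixes Sg Gm Dl :: "('a::finite) fm multiset" and p :: nat and a :: 'a
  assumes "wf_ms Sg" and "wf_ms Gm" and "wf_ms Dl" and "boxed_ms Sg"
  shows "\<exists>A. wf A
    \<and> vars A \<subseteq> vars_ms (Sg + Gm + Dl) - {p}
    \<and> agts A \<subseteq> agts_ms (Sg + Gm + Dl) - {a}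
    \<and> deriv Sg (add_mset A Gm) Dl
    \<and> (\<forall>Pi Lm Th. wf_ms Pi \<and> wf_ms Lm \<and> wf_ms Th \<and> boxed_ms Th
          \<and> p \<notin> vars_ms (Pi + Lm + Th) \<and> a \<notin> agts_ms (Pi + Lm + Th)
          \<and> deriv (Th + Sg) (Pi + Gm) (Dl + Lm)
          \<longrightarrow> deriv {#} (Th + Pi) (add_mset A Lm))"
proof -
  obtain A where A: "uniform_interpolant p a Sg Gm Dl A"
    using ex_uniform_interpolant[OF assms] by blast
  have "deriv {#} (Th + Pi) (add_mset A Lm)"
    if "wf_ms Pi \<and> wf_ms Lm \<and> wf_ms Th \<and> boxed_ms Th \<and> p \<notin> vars_ms (Pi + Lm + Th)
      \<and> a \<notin> agts_ms (Pi + Lm + Th) \<and> deriv (Th + Sg) (Pi + Gm) (Dl + Lm)" for Pi Lm Th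
    using that uniform_interpolantD(5)[OF A] by (intro deriv_boxed_into_antecedent) (simp add: avoids_def)
  then show ?thesis
    using uniform_interpolantD(1-4)[OF A] by blast
qed

end
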